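(* Let $\Delta_3=x_1x_2x_1\in\mathcal{B}_3$. For every integer $k\ge0$, $$V_3(\Delta_3^{2k})=2s^{12k}+s^{6k+2}+s^{6k-2},\qquad V_3(\Delta_3^{2k+1})=-s^{6k+5}-s^{6k+1}.$$
   Context: $\mathcal{B}_3$ is the braid group on three strands with standard Artin generators $x_1,x_2$; $V_3(\beta)$ is the Jones polynomial of the closure $\widehat\beta$, normalized by $V(\text{unknot})=1$ and $q^{-1}V_{L_+}-qV_{L_-}=(q^{1/2}-q^{-1/2})V_{L_0}$, written in the variable $s=q^{-1/2}$. Conventions: closures of $\alpha x_i^{e+2}\gamma$, $\alpha x_i^{e+1}\gamma$, $\alpha x_i^{e}\gamma$ play the roles of $L_-,L_0,L_+$ (e.g. the closure of $x_1^2\in\mathcal B_2$ has Jones polynomial $-s-s^5$). *)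

theory Defs
  imports Complex_Main
begin

text \<open>Braid words on n strands: a list of nonzero integers; the letter i (i > 0)
  stands for the Artin generator x_i, the letter -i for its inverse.\<close>

type_synonym braid_word = "int list"

definition levels :: "braid_word \<Rightarrow> nat" where
  "levels w = (if w = [] then 1 else length w)"

text \<open>Points of the closed diagram: (level, strand position); crossing j sits between
  level j and level (j+1) mod levels w (closure identifies top with bottom).\<close>
definition diag_points :: "nat \<Rightarrow> braid_word \<Rightarrow> (nat \<times> nat) set" where
  "diag_points n w = {0..<levels w} \<times> {1..n}"

text \<open>Edges produced by smoothing crossing j (between strands i and i+1):
  the vertical (identity) smoothing, or the horizontal (cup-cap) smoothing.\<close>
definition crossing_edges ::
  "nat \<Rightarrow> nat \<Rightarrow> nat \<Rightarrow> nat \<Rightarrow> bool \<Rightarrow> ((nat \<times> nat) \<times> (nat \<times> nat)) set" where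
  "crossing_edges n L j i vert =
     (if vert then {((j,p), ((j+1) mod L, p)) | p. p \<in> {1..n}}
      else {((j,i),(j,i+1)), (((j+1) mod L, i), ((j+1) mod L, i+1))}
           \<union> {((j,p), ((j+1) mod L, p)) | p. p \<in> {1..n} \<and> p \<noteq> i \<and> p \<noteq> i+1})"

definition state_edges :: "nat \<Rightarrow> braid_word \<Rightarrow> nat set \<Rightarrow> ((nat \<times> nat) \<times> (nat \<times> nat)) set" where
  "state_edges n w S =
     (\<Union>j\<in>{0..<length w}. crossing_edges n (levels w) j (nat \<bar>w ! j\<bar>) (j \<in> S))"

text \<open>Number of loops of the state S (S = set of crossings smoothed vertically).\<close>
definition state_loops :: "nat \<Rightarrow> braid_word \<Rightarrow> nat set \<Rightarrow> nat" where
  "state_loops n w S =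
     card (diag_points n w // ((state_edges n w S \<union> (state_edges n w S)\<inverse>)\<^sup>*))"

text \<open>Kauffman bracket (normalized so that the unknot has bracket 1), in the variable A.
  For a letter x_i the vertical smoothing gets weight A, for x_i^{-1} it gets A^{-1}.\<close>
definition kauffman_bracket :: "nat \<Rightarrow> braid_word \<Rightarrow> real \<Rightarrow> real" where
  "kauffman_bracket n w A =
     (\<Sum>S\<in>Pow {0..<length w}.
        (\<Prod>j\<in>{0..<length w}. if (j \<in> S) = (w ! j > 0) then A else inverse A)
        * (- A\<^sup>2 - inverse A ^ 2) ^ (state_loops n w S - 1))"

definition writhe :: "braid_word \<Rightarrow> int" where
  "writhe w = sum_list (map sgn w)"

text \<open>With this choice, the closure of x_1^2 in B_2 gets -s - s^5, matching the
  paper's conventions (closures of x_i^{e+2}, x_i^{e+1}, x_i^e play L_-, L_0, L_+).\<close>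
definition jones_closure :: "nat \<Rightarrow> braid_word \<Rightarrow> real \<Rightarrow> real" where
  "jones_closure n w s =
     (let A = s powr (-1/2) in ((- (A ^ 3)) powi (- writhe w)) * kauffman_bracket n w A)"

abbreviation V3 :: "braid_word \<Rightarrow> real \<Rightarrow> real" where
  "V3 \<equiv> jones_closure 3"

definition Delta3 :: braid_word where
  "Delta3 = [1, 2, 1]"

definition braid_pow :: "braid_word \<Rightarrow> nat \<Rightarrow> braid_word" where
  "braid_pow w m = concat (replicate m w)"

end

theory Submission
  imports Defs
begin

text \<open>Smooth the crossings of the closed braid level by level. Up to closed loops, the part of
  the diagram below the current level always connects the six endpoints on level \<open>0\<close> and on the
  current level like one of the five Temperley--Lieb diagrams on three strands, and smoothing the
  next crossing multiplies that diagram by \<open>1\<close> or \<open>e\<^sub>i\<close>. So the number of loops of a Kauffman state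
  is computed by a finite automaton, and the state sum becomes a transfer recursion over the five
  diagrams. Along the powers of \<open>\<Delta>\<^sub>3 = x\<^sub>1x\<^sub>2x\<^sub>1\<close> this recursion closes up in two steps, with
  explicit solutions for odd and even powers, and the writhe normalisation in \<open>s = A\<^sup>-\<^sup>2\<close>
  yields the two formulas.\<close>

section \<open>Components of a symmetric relation under edge insertion\<close>

lemma equiv_rtrancl: "sym R \<Longrightarrow> equiv UNIV (R\<^sup>*)"
  by (simp add: equiv_def refl_rtrancl sym_rtrancl trans_rtrancl)

lemma rtrancl_Un_sym_edge_iff:
  assumes "sym R"
  shows "(x, y) \<in> (R \<union> {(a, b), (b, a)})\<^sup>* \<longleftrightarrow>
         (x, y) \<in> R\<^sup>* \<or> (x, a) \<in> R\<^sup>* \<and> (b, y) \<in> R\<^sup>* \<or> (x, b) \<in> R\<^sup>* \<and> (a, y) \<in> R\<^sup>*"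
    (is "_ \<longleftrightarrow> ?link x y")
proof
  have sym_star: "(u, v) \<in> R\<^sup>* \<Longrightarrow> (v, u) \<in> R\<^sup>*" for u v
    using assms by (simp add: sym_rtrancl symD)
  show "(x, y) \<in> (R \<union> {(a, b), (b, a)})\<^sup>* \<Longrightarrow> ?link x y"
  proof (induction rule: rtrancl_induct)
    case (step y z)
    from step.hyps(2) show ?case
    proof
      assume "(y, z) \<in> R"
      with step.IH show ?thesis by (auto intro: rtrancl_into_rtrancl)
    next
      assume "(y, z) \<in> {(a, b), (b, a)}"
      with step.IH sym_star show ?thesis by (auto intro: rtrancl_trans)
    qed
  qed simp
next
  have "R\<^sup>* \<subseteq> (R \<union> {(a, b), (b, a)})\<^sup>*" by (rule rtrancl_mono) auto
  moreover have "(a, b) \<in> (R \<union> {(a, b), (b, a)})\<^sup>*" "(b, a) \<in> (R \<union> {(a, b), (b, a)})\<^sup>*" by auto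
  ultimately show "?link x y \<Longrightarrow> (x, y) \<in> (R \<union> {(a, b), (b, a)})\<^sup>*"
    by (auto intro: rtrancl_trans)
qed

lemma Image_rtrancl_Un_sym_edge:
  assumes "sym R" "(a, b) \<notin> R\<^sup>*"
  shows "(R \<union> {(a, b), (b, a)})\<^sup>* `` {x} =
         (if x \<in> R\<^sup>* `` {a} \<union> R\<^sup>* `` {b} then R\<^sup>* `` {a} \<union> R\<^sup>* `` {b} else R\<^sup>* `` {x})"
proof -
  have sym_star: "(u, v) \<in> R\<^sup>* \<Longrightarrow> (v, u) \<in> R\<^sup>*" for u v
    using assms(1) by (simp add: sym_rtrancl symD)
  have same_class: "(x, y) \<in> R\<^sup>* \<longleftrightarrow> (u, y) \<in> R\<^sup>*" if "(x, u) \<in> R\<^sup>*" for x u y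
    using that sym_star rtrancl_trans by metis
  have not_both: "\<not> ((x, a) \<in> R\<^sup>* \<and> (x, b) \<in> R\<^sup>*)"
    using assms(2) sym_star rtrancl_trans by metis
  have image: "(R \<union> {(a, b), (b, a)})\<^sup>* `` {x} =
        {y. (x, y) \<in> R\<^sup>* \<or> (x, a) \<in> R\<^sup>* \<and> (b, y) \<in> R\<^sup>* \<or> (x, b) \<in> R\<^sup>* \<and> (a, y) \<in> R\<^sup>*}"
    using rtrancl_Un_sym_edge_iff[OF assms(1)] by blast
  show ?thesis
  proof (cases "(x, a) \<in> R\<^sup>*")
    case True
    then show ?thesis unfolding image using not_both same_class[OF True] sym_star by auto
  next
    case xa: False
    show ?thesis
    proof (cases "(x, b) \<in> R\<^sup>*")
      case True
      then show ?thesis unfolding image using xa same_class[OF True] sym_star by auto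
    next
      case False
      then show ?thesis unfolding image using xa sym_star by auto
    qed
  qed
qed

lemma rtrancl_Un_sym_edge_eq:
  assumes "sym R" "(a, b) \<in> R\<^sup>*"
  shows "(R \<union> {(a, b), (b, a)})\<^sup>* = R\<^sup>*"
proof -
  have "(b, a) \<in> R\<^sup>*" using assms by (simp add: sym_rtrancl symD)
  then show ?thesis
    using rtrancl_Un_sym_edge_iff[OF assms(1)] assms(2) by (auto intro: rtrancl_trans)
qed

lemma quotient_rtrancl_Un_sym_edge:
  assumes "sym R" "(a, b) \<notin> R\<^sup>*" "a \<in> V" "b \<in> V"
  shows "V // (R \<union> {(a, b), (b, a)})\<^sup>* =
         insert (R\<^sup>* `` {a} \<union> R\<^sup>* `` {b}) (V // R\<^sup>* - {R\<^sup>* `` {a}, R\<^sup>* `` {b}})"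
    (is "V // ?K = insert (?A \<union> ?B) (V // R\<^sup>* - {?A, ?B})")
proof -
  have same_class: "R\<^sup>* `` {x} = R\<^sup>* `` {u}" if "(u, x) \<in> R\<^sup>*" for u x
    using equiv_class_eq_iff[OF equiv_rtrancl[OF assms(1)]] that by simp
  note image = Image_rtrancl_Un_sym_edge[OF assms(1,2)]
  show ?thesis
  proof
    show "V // ?K \<subseteq> insert (?A \<union> ?B) (V // R\<^sup>* - {?A, ?B})"
    proof
      fix X assume "X \<in> V // ?K"
      then obtain x where x: "x \<in> V" "X = ?K `` {x}" by (auto elim: quotientE)
      show "X \<in> insert (?A \<union> ?B) (V // R\<^sup>* - {?A, ?B})"
      proof (cases "x \<in> ?A \<union> ?B")
        case False
        then have "R\<^sup>* `` {x} \<noteq> ?A" "R\<^sup>* `` {x} \<noteq> ?B" by auto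
        then show ?thesis using x False image by (auto intro: quotientI)
      qed (use x image in simp)
    qed
  next
    show "insert (?A \<union> ?B) (V // R\<^sup>* - {?A, ?B}) \<subseteq> V // ?K"
    proof
      fix X assume X: "X \<in> insert (?A \<union> ?B) (V // R\<^sup>* - {?A, ?B})"
      show "X \<in> V // ?K"
      proof (cases "X = ?A \<union> ?B")
        case True
        then have "X = ?K `` {a}" using image by simp
        then show ?thesis using assms(3) by (auto intro: quotientI)
      next
        case False
        then have X_class: "X \<in> V // R\<^sup>*" "X \<noteq> ?A" "X \<noteq> ?B" using X by auto
        then obtain x where x: "x \<in> V" "X = R\<^sup>* `` {x}" by (auto elim: quotientE)
        then have "x \<notin> ?A \<union> ?B" using X_class(2,3) same_class by blast
        then have "X = ?K `` {x}" using x(2) image by simp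
        then show ?thesis using x(1) by (auto intro: quotientI)
      qed
    qed
  qed
qed

lemma card_quotient_rtrancl_Un_sym_edge:
  assumes "finite V" "sym R" "a \<in> V" "b \<in> V"
  shows "card (V // R\<^sup>*) = card (V // (R \<union> {(a, b), (b, a)})\<^sup>*) + (if (a, b) \<in> R\<^sup>* then 0 else 1)"
proof (cases "(a, b) \<in> R\<^sup>*")
  case True
  then show ?thesis using rtrancl_Un_sym_edge_eq[OF assms(2)] by simp
next
  case False
  let ?A = "R\<^sup>* `` {a}" and ?B = "R\<^sup>* `` {b}"
  have same_class: "R\<^sup>* `` {x} = R\<^sup>* `` {u}" if "(u, x) \<in> R\<^sup>*" for u x
    using equiv_class_eq_iff[OF equiv_rtrancl[OF assms(2)]] that by simp
  have fin: "finite (V // R\<^sup>*)" using assms(1) unfolding quotient_def by simp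
  have AB: "?A \<in> V // R\<^sup>*" "?B \<in> V // R\<^sup>*" "?A \<noteq> ?B"
    using assms(3,4) False by (auto intro: quotientI)
  have "?A \<union> ?B \<notin> V // R\<^sup>* - {?A, ?B}"
  proof
    assume union_class: "?A \<union> ?B \<in> V // R\<^sup>* - {?A, ?B}"
    then have "?A \<union> ?B \<in> V // R\<^sup>*" by simp
    then obtain x where x: "?A \<union> ?B = R\<^sup>* `` {x}" by (metis quotientE)
    then have "(x, a) \<in> R\<^sup>*" by blast
    then have "?A \<union> ?B = ?A" using x same_class by metis
    then show False using union_class by simp
  qed
  then have "card (V // (R \<union> {(a, b), (b, a)})\<^sup>*) = card (V // R\<^sup>* - {?A, ?B}) + 1"
    unfolding quotient_rtrancl_Un_sym_edge[OF assms(2) False assms(3,4)] using fin by simp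
  moreover have "card (V // R\<^sup>* - {?A, ?B}) + 2 = card (V // R\<^sup>*)"
  proof -
    have "card {?A, ?B} \<le> card (V // R\<^sup>*)" using AB fin by (intro card_mono) auto
    then show ?thesis using AB fin by (simp add: card_Diff_subset)
  qed
  ultimately show ?thesis using False by simp
qed

definition link_pred :: "('l \<Rightarrow> 'l \<Rightarrow> bool) \<Rightarrow> 'l \<Rightarrow> 'l \<Rightarrow> 'l \<Rightarrow> 'l \<Rightarrow> bool" where
  "link_pred P a b = (\<lambda>u v. P u v \<or> P u a \<and> P b v \<or> P u b \<and> P a v)"

fun link_edges :: "('l \<Rightarrow> 'l \<Rightarrow> bool) \<Rightarrow> ('l \<times> 'l) list \<Rightarrow> 'l \<Rightarrow> 'l \<Rightarrow> bool" where
  "link_edges P [] = P"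
| "link_edges P ((a, b) # es) = link_edges (link_pred P a b) es"

fun merge_count :: "('l \<Rightarrow> 'l \<Rightarrow> bool) \<Rightarrow> ('l \<times> 'l) list \<Rightarrow> nat" where
  "merge_count P [] = 0"
| "merge_count P ((a, b) # es) = (if P a b then 0 else 1) + merge_count (link_pred P a b) es"

definition edges_of :: "('l \<Rightarrow> 'p) \<Rightarrow> ('l \<times> 'l) list \<Rightarrow> ('p \<times> 'p) set" where
  "edges_of f es = (\<lambda>(a, b). (f a, f b)) ` set es"

lemma edges_of_Cons: "edges_of f ((a, b) # es) = insert (f a, f b) (edges_of f es)"
  by (simp add: edges_of_def)

lemma components_add_edges:
  assumes "finite V" "sym R" "set es \<subseteq> L \<times> L" "f ` L \<subseteq> V"
    and "\<forall>u\<in>L. \<forall>v\<in>L. P u v = ((f u, f v) \<in> R\<^sup>*)"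
  shows "(\<forall>u\<in>L. \<forall>v\<in>L. link_edges P es u v =
            ((f u, f v) \<in> (R \<union> edges_of f es \<union> (edges_of f es)\<inverse>)\<^sup>*))
       \<and> card (V // R\<^sup>*) = card (V // (R \<union> edges_of f es \<union> (edges_of f es)\<inverse>)\<^sup>*) + merge_count P es"
  using assms(2-)
proof (induction es arbitrary: R P)
  case Nil
  then show ?case by (simp add: edges_of_def)
next
  case (Cons e es)
  obtain a b where e: "e = (a, b)" by (cases e)
  have a: "a \<in> L" and b: "b \<in> L" using Cons.prems(2) e by auto
  define R' where "R' = R \<union> {(f a, f b), (f b, f a)}"
  have sym': "sym R'" using Cons.prems(1) unfolding R'_def sym_def by auto
  have es: "set es \<subseteq> L \<times> L" using Cons.prems(2) by auto
  have link: "\<forall>u\<in>L. \<forall>v\<in>L. link_pred P a b u v = ((f u, f v) \<in> R'\<^sup>*)"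
    using Cons.prems(4) a b unfolding R'_def rtrancl_Un_sym_edge_iff[OF Cons.prems(1)] link_pred_def
    by auto
  note IH = Cons.IH[OF sym' es Cons.prems(3) link]
  have R': "R' \<union> edges_of f es \<union> (edges_of f es)\<inverse> = R \<union> edges_of f (e # es) \<union> (edges_of f (e # es))\<inverse>"
    unfolding R'_def e edges_of_Cons by auto
  have "card (V // R\<^sup>*) = card (V // R'\<^sup>*) + (if (f a, f b) \<in> R\<^sup>* then 0 else 1)"
    unfolding R'_def using Cons.prems(3) a b
    by (intro card_quotient_rtrancl_Un_sym_edge[OF assms(1) Cons.prems(1)]) auto
  moreover have "P a b = ((f a, f b) \<in> R\<^sup>*)" using Cons.prems(4) a b by auto
  ultimately show ?case using IH R' e by simp
qed

section \<open>Temperley--Lieb diagrams on three strands\<close>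

text \<open>The five Temperley--Lieb diagrams on three strands, named by their words in \<open>e\<^sub>1, e\<^sub>2\<close>
  (read bottom to top). Endpoint \<open>(0, p)\<close> is the \<open>p\<close>-th bottom point, \<open>(1, p)\<close> the \<open>p\<close>-th top point.\<close>
datatype tl3 = TL_id | TL_e1 | TL_e2 | TL_e1e2 | TL_e2e1

fun tl_arcs :: "tl3 \<Rightarrow> ((nat \<times> nat) \<times> (nat \<times> nat)) list" where
  "tl_arcs TL_id = [((0,1),(1,1)), ((0,2),(1,2)), ((0,3),(1,3))]"
| "tl_arcs TL_e1 = [((0,1),(0,2)), ((1,1),(1,2)), ((0,3),(1,3))]"
| "tl_arcs TL_e2 = [((0,2),(0,3)), ((1,2),(1,3)), ((0,1),(1,1))]"
| "tl_arcs TL_e1e2 = [((0,1),(0,2)), ((1,2),(1,3)), ((0,3),(1,1))]"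
| "tl_arcs TL_e2e1 = [((0,2),(0,3)), ((1,1),(1,2)), ((0,1),(1,3))]"

definition tl_conn :: "tl3 \<Rightarrow> nat \<times> nat \<Rightarrow> nat \<times> nat \<Rightarrow> bool" where
  "tl_conn D u v = (u = v \<or> (u, v) \<in> set (tl_arcs D) \<or> (v, u) \<in> set (tl_arcs D))"

text \<open>\<open>D\<close> together with a third row of isolated points \<open>(2, p)\<close>, the top of the next crossing.\<close>
definition tl_conn_ext :: "tl3 \<Rightarrow> nat \<times> nat \<Rightarrow> nat \<times> nat \<Rightarrow> bool" where
  "tl_conn_ext D u v = (if fst u = 2 \<or> fst v = 2 then u = v else tl_conn D u v)"

definition tl_points :: "(nat \<times> nat) set" where
  "tl_points = {0, 1} \<times> {1, 2, 3}"

definition tl_ext_points :: "(nat \<times> nat) set" where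
  "tl_ext_points = {0, 1, 2} \<times> {1, 2, 3}"

definition other_strand :: "nat \<Rightarrow> nat" where
  "other_strand i = (if i = 1 then 3 else 1)"

text \<open>The three arcs of the smoothing of a crossing on strands \<open>i, i + 1\<close> between rows \<open>1\<close> and \<open>2\<close>
  (vertical if \<open>b\<close>, horizontal otherwise), and between row \<open>1\<close> and the bottom row \<open>0\<close>,
  which is how the last crossing closes up the braid.\<close>
definition smoothing_arcs :: "nat \<Rightarrow> bool \<Rightarrow> ((nat \<times> nat) \<times> (nat \<times> nat)) list" where
  "smoothing_arcs i b = (if b then [((1,1),(2,1)), ((1,2),(2,2)), ((1,3),(2,3))]
     else [((1,i),(1,i+1)), ((2,i),(2,i+1)), ((1,other_strand i),(2,other_strand i))])"

definition closing_arcs :: "nat \<Rightarrow> bool \<Rightarrow> ((nat \<times> nat) \<times> (nat \<times> nat)) list" where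
  "closing_arcs i b = (if b then [((1,1),(0,1)), ((1,2),(0,2)), ((1,3),(0,3))]
     else [((1,i),(1,i+1)), ((0,i),(0,i+1)), ((1,other_strand i),(0,other_strand i))])"

definition lift_row :: "nat \<times> nat \<Rightarrow> nat \<times> nat" where
  "lift_row u = (if fst u = 1 then (2, snd u) else u)"

text \<open>Multiplying \<open>D\<close> on top by \<open>1\<close> (if \<open>b\<close>) or by \<open>e\<^sub>i\<close>: the product diagram and the number of
  loops it closes off.\<close>
definition tl_step :: "tl3 \<Rightarrow> nat \<Rightarrow> bool \<Rightarrow> tl3 \<times> nat" where
  "tl_step D i b = (if b then (D, 0) else (case D of
      TL_id \<Rightarrow> (if i = 1 then (TL_e1, 0) else (TL_e2, 0))
    | TL_e1 \<Rightarrow> (if i = 1 then (TL_e1, 1) else (TL_e1e2, 0))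
    | TL_e2 \<Rightarrow> (if i = 1 then (TL_e2e1, 0) else (TL_e2, 1))
    | TL_e1e2 \<Rightarrow> (if i = 1 then (TL_e1, 0) else (TL_e1e2, 1))
    | TL_e2e1 \<Rightarrow> (if i = 1 then (TL_e2e1, 1) else (TL_e2, 0))))"

text \<open>The number of loops of the closure of \<open>D\<close> times \<open>1\<close> or \<open>e\<^sub>i\<close>.\<close>
definition tl_close :: "tl3 \<Rightarrow> nat \<Rightarrow> bool \<Rightarrow> nat" where
  "tl_close D i b = (case D of
      TL_id \<Rightarrow> (if b then 3 else 2)
    | TL_e1 \<Rightarrow> (if b then 2 else if i = 1 then 3 else 1)
    | TL_e2 \<Rightarrow> (if b then 2 else if i = 1 then 1 else 3)
    | TL_e1e2 \<Rightarrow> (if b then 1 else 2)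
    | TL_e2e1 \<Rightarrow> (if b then 1 else 2))"

lemma tl_conn_TL_id: "\<forall>u\<in>tl_points. \<forall>v\<in>tl_points. tl_conn TL_id u v = (snd u = snd v)"
  by (simp add: tl_points_def tl_conn_def)

lemma tl_conn_tl_step:
  assumes "i = 1 \<or> i = 2"
  shows "\<forall>u\<in>tl_points. \<forall>v\<in>tl_points.
           tl_conn (fst (tl_step D i b)) u v = link_edges (tl_conn_ext D) (smoothing_arcs i b) (lift_row u) (lift_row v)"
  using assms unfolding tl_points_def
  by (elim disjE; cases D; cases b;
      simp add: tl_step_def smoothing_arcs_def other_strand_def link_pred_def tl_conn_ext_def tl_conn_def lift_row_def)

lemma merge_count_tl_step:
  assumes "i = 1 \<or> i = 2"
  shows "merge_count (tl_conn_ext D) (smoothing_arcs i b) + snd (tl_step D i b) = 3"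
  using assms
  by (elim disjE; cases D; cases b;
      simp add: tl_step_def smoothing_arcs_def other_strand_def link_pred_def tl_conn_ext_def tl_conn_def)

lemma merge_count_tl_close:
  assumes "i = 1 \<or> i = 2"
  shows "merge_count (tl_conn D) (closing_arcs i b) + tl_close D i b = 3"
  using assms
  by (elim disjE; cases D; cases b;
      simp add: tl_close_def closing_arcs_def other_strand_def link_pred_def tl_conn_def)



section \<open>Connectivity of a partially smoothed closed 3-braid\<close>

definition level_emb :: "nat \<Rightarrow> nat \<times> nat \<Rightarrow> nat \<times> nat" where
  "level_emb j u = (if fst u = 0 then 0 else if fst u = 1 then j else Suc j, snd u)"

lemma lift_row_tl_points:
  assumes "x \<in> tl_points"
  shows "lift_row x \<in> tl_ext_points" "level_emb j (lift_row x) = level_emb (Suc j) x"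
  using assms unfolding tl_points_def tl_ext_points_def lift_row_def level_emb_def mem_Times_iff by auto

lemma crossing_edges_3:
  assumes "i = 1 \<or> i = 2" "j' = (j + 1) mod L"
  shows "crossing_edges 3 L j i b =
     (if b then {((j,1),(j',1)), ((j,2),(j',2)), ((j,3),(j',3))}
      else {((j,i),(j,i+1)), ((j',i),(j',i+1)), ((j,other_strand i),(j',other_strand i))})"
  unfolding crossing_edges_def assms(2)[symmetric] using assms(1)
  by (cases b) (auto simp: other_strand_def)

lemma crossing_edges_inner:
  assumes "Suc j < L" "i = 1 \<or> i = 2"
  shows "crossing_edges 3 L j i b = edges_of (level_emb j) (smoothing_arcs i b)"
proof -
  have next_level: "Suc j = (j + 1) mod L" using assms(1) by simp
  show ?thesis unfolding crossing_edges_3[OF assms(2) next_level] using assms(2)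
    by (cases b; elim disjE; simp add: edges_of_def smoothing_arcs_def level_emb_def other_strand_def insert_commute)
qed

lemma crossing_edges_last:
  assumes "Suc j = L" "i = 1 \<or> i = 2"
  shows "crossing_edges 3 L j i b = edges_of (level_emb j) (closing_arcs i b)"
proof -
  have next_level: "0 = (j + 1) mod L" using assms(1) by simp
  show ?thesis unfolding crossing_edges_3[OF assms(2) next_level] using assms(2)
    by (cases b; elim disjE; simp add: edges_of_def closing_arcs_def level_emb_def other_strand_def insert_commute)
qed

definition strand_index :: "braid_word \<Rightarrow> nat \<Rightarrow> nat" where
  "strand_index w j = nat \<bar>w ! j\<bar>"

definition prefix_edges :: "braid_word \<Rightarrow> nat set \<Rightarrow> nat \<Rightarrow> ((nat \<times> nat) \<times> (nat \<times> nat)) set" where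
  "prefix_edges w S j = (\<Union>j'\<in>{0..<j}. crossing_edges 3 (length w) j' (strand_index w j') (j' \<in> S))"

definition prefix_conn :: "braid_word \<Rightarrow> nat set \<Rightarrow> nat \<Rightarrow> ((nat \<times> nat) \<times> (nat \<times> nat)) set" where
  "prefix_conn w S j = (prefix_edges w S j \<union> (prefix_edges w S j)\<inverse>)\<^sup>*"

definition tl_represents :: "braid_word \<Rightarrow> nat set \<Rightarrow> nat \<Rightarrow> tl3 \<Rightarrow> bool" where
  "tl_represents w S j D \<longleftrightarrow>
     (\<forall>u\<in>tl_points. \<forall>v\<in>tl_points. tl_conn D u v = ((level_emb j u, level_emb j v) \<in> prefix_conn w S j))"

fun tl_step_count :: "tl3 \<times> nat \<Rightarrow> nat \<times> bool \<Rightarrow> tl3 \<times> nat" where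
  "tl_step_count (D, l) (i, b) = (fst (tl_step D i b), l + snd (tl_step D i b))"

definition tl_run :: "tl3 \<times> nat \<Rightarrow> (nat \<times> bool) list \<Rightarrow> tl3 \<times> nat" where
  "tl_run = foldl tl_step_count"

definition prefix_smoothings :: "braid_word \<Rightarrow> nat set \<Rightarrow> nat \<Rightarrow> (nat \<times> bool) list" where
  "prefix_smoothings w S j = map (\<lambda>j'. (strand_index w j', j' \<in> S)) [0..<j]"

lemma prefix_conn_sym: "(x, y) \<in> prefix_conn w S j \<Longrightarrow> (y, x) \<in> prefix_conn w S j"
  unfolding prefix_conn_def by (metis sym_Un_converse sym_rtrancl symD)

context
  fixes w :: braid_word and S :: "nat set"
  assumes letters: "set w \<subseteq> {1, 2}" and long: "2 \<le> length w"
begin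

lemma strand_index_cases:
  assumes "j < length w"
  shows "strand_index w j = 1 \<or> strand_index w j = 2"
proof -
  from assms have "w ! j \<in> {1, 2}" using letters nth_mem by blast
  then show ?thesis unfolding strand_index_def by auto
qed

lemma diag_points_eq: "diag_points 3 w = {0..<length w} \<times> {1..3}"
  using long by (auto simp: diag_points_def levels_def)

lemma state_edges_eq_prefix_edges: "state_edges 3 w S = prefix_edges w S (length w)"
  using long unfolding state_edges_def prefix_edges_def levels_def strand_index_def by auto

lemma prefix_edges_Suc:
  "prefix_edges w S (Suc j) = prefix_edges w S j \<union> crossing_edges 3 (length w) j (strand_index w j) (j \<in> S)"
  unfolding prefix_edges_def by (simp add: atLeast0_lessThan_Suc Un_commute)

lemma prefix_edges_below:
  assumes "j < length w" "(x, y) \<in> prefix_edges w S j"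
  shows "fst x \<le> j \<and> fst y \<le> j"
proof -
  obtain j' where j': "j' < j" "(x, y) \<in> crossing_edges 3 (length w) j' (strand_index w j') (j' \<in> S)"
    using assms(2) unfolding prefix_edges_def by auto
  have j'_less: "j' < length w" and next_level: "Suc j' = (j' + 1) mod length w" using j' assms(1) by simp_all
  from j'(2)[unfolded crossing_edges_3[OF strand_index_cases[OF j'_less] next_level]] show ?thesis
    using j'(1) assms(1) by (auto split: if_splits)
qed

lemma prefix_conn_above:
  assumes "j < length w" "(x, y) \<in> prefix_conn w S j" "j < fst x"
  shows "y = x"
proof -
  have "x \<notin> Domain (prefix_edges w S j \<union> (prefix_edges w S j)\<inverse>)"
    using assms(3) by (auto dest!: prefix_edges_below[OF assms(1)])
  then show ?thesis using assms(2) Not_Domain_rtrancl unfolding prefix_conn_def by metis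
qed

text \<open>The points of the next level are still isolated, so \<open>D\<close> extended by a row of isolated
  points describes the connectivity of levels \<open>0\<close>, \<open>j\<close> and \<open>j + 1\<close>.\<close>
lemma tl_conn_ext_prefix_conn:
  assumes "j < length w" "tl_represents w S j D"
  shows "\<forall>u\<in>tl_ext_points. \<forall>v\<in>tl_ext_points.
           tl_conn_ext D u v = ((level_emb j u, level_emb j v) \<in> prefix_conn w S j)"
proof (intro ballI)
  fix u v assume u: "u \<in> tl_ext_points" and v: "v \<in> tl_ext_points"
  show "tl_conn_ext D u v = ((level_emb j u, level_emb j v) \<in> prefix_conn w S j)"
  proof (cases "fst u = 2 \<or> fst v = 2")
    case True
    have emb_inj: "level_emb j u = level_emb j v \<longleftrightarrow> u = v"
      using True u v unfolding tl_ext_points_def level_emb_def by (auto simp: prod_eq_iff)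
    have emb_eq: "level_emb j u = level_emb j v" if conn: "(level_emb j u, level_emb j v) \<in> prefix_conn w S j"
    proof (cases "fst u = 2")
      case True
      then show ?thesis using prefix_conn_above[OF assms(1) conn] by (simp add: level_emb_def)
    next
      case False
      then have "fst v = 2" using \<open>fst u = 2 \<or> fst v = 2\<close> by simp
      then show ?thesis using prefix_conn_above[OF assms(1) prefix_conn_sym[OF conn]] by (simp add: level_emb_def)
    qed
    have "(level_emb j u, level_emb j v) \<in> prefix_conn w S j \<longleftrightarrow> u = v"
    proof
      assume "(level_emb j u, level_emb j v) \<in> prefix_conn w S j"
      then show "u = v" using emb_eq emb_inj by blast
    qed (simp add: prefix_conn_def)
    then show ?thesis using True by (simp add: tl_conn_ext_def)
  next
    case False
    then have "u \<in> tl_points" "v \<in> tl_points"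
      using u v False unfolding tl_ext_points_def tl_points_def mem_Times_iff by auto
    then have "tl_conn D u v = ((level_emb j u, level_emb j v) \<in> prefix_conn w S j)"
      using assms(2) unfolding tl_represents_def by blast
    then show ?thesis using False by (simp add: tl_conn_ext_def)
  qed
qed

lemma finite_diag_points: "finite (diag_points 3 w)"
  by (simp add: diag_points_eq)

lemma prefix_conn_Suc:
  "prefix_conn w S (Suc j) = (prefix_edges w S j \<union> (prefix_edges w S j)\<inverse>
     \<union> crossing_edges 3 (length w) j (strand_index w j) (j \<in> S)
     \<union> (crossing_edges 3 (length w) j (strand_index w j) (j \<in> S))\<inverse>)\<^sup>*"
  unfolding prefix_conn_def prefix_edges_Suc by (simp add: converse_Un Un_ac)

lemma prefix_conn_0: "prefix_conn w S 0 = Id"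
  by (simp add: prefix_conn_def prefix_edges_def)

lemma prefix_invariant_0:
  "tl_represents w S 0 TL_id \<and> card (diag_points 3 w // prefix_conn w S 0) = 3 * (length w - 1) + 3"
proof
  show "tl_represents w S 0 TL_id"
    using tl_conn_TL_id unfolding tl_represents_def prefix_conn_0 tl_points_def mem_Times_iff
    by (auto simp: level_emb_def)
  have "diag_points 3 w // Id = (\<lambda>x. {x}) ` diag_points 3 w" by (auto simp: quotient_def)
  then show "card (diag_points 3 w // prefix_conn w S 0) = 3 * (length w - 1) + 3"
    using long by (simp add: prefix_conn_0 card_image diag_points_eq)
qed

text \<open>Smoothing crossing \<open>j\<close> adds three arcs on the isolated points of level \<open>j + 1\<close>; those not
  merging two components of the diagram are exactly the new loops counted by \<open>tl_step\<close>.\<close>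
lemma prefix_invariant_Suc:
  assumes j: "Suc j < length w"
    and D: "tl_represents w S j D"
    and l: "card (diag_points 3 w // prefix_conn w S j) = 3 * (length w - 1 - j) + 3 + l"
  defines "i \<equiv> strand_index w j" and "b \<equiv> j \<in> S"
  shows "tl_represents w S (Suc j) (fst (tl_step D i b))
       \<and> card (diag_points 3 w // prefix_conn w S (Suc j))
           = 3 * (length w - 1 - Suc j) + 3 + (l + snd (tl_step D i b))"
proof
  define R where "R = prefix_edges w S j \<union> (prefix_edges w S j)\<inverse>"
  define es where "es = smoothing_arcs i b"
  have i: "i = 1 \<or> i = 2" unfolding i_def using j strand_index_cases[of j] by simp
  have sym: "sym R" unfolding R_def by (simp add: sym_Un_converse)
  have es: "set es \<subseteq> tl_ext_points \<times> tl_ext_points"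
    using i unfolding es_def smoothing_arcs_def tl_ext_points_def other_strand_def by auto
  have emb: "level_emb j ` tl_ext_points \<subseteq> diag_points 3 w"
    using j unfolding tl_ext_points_def diag_points_eq level_emb_def by auto
  have conn: "prefix_conn w S j = R\<^sup>*" by (simp add: prefix_conn_def R_def)
  have "crossing_edges 3 (length w) j i b = edges_of (level_emb j) es"
    unfolding es_def using crossing_edges_inner[OF j i] .
  then have conn_Suc: "prefix_conn w S (Suc j) = (R \<union> edges_of (level_emb j) es \<union> (edges_of (level_emb j) es)\<inverse>)\<^sup>*"
    unfolding prefix_conn_Suc R_def i_def b_def by simp
  note add = components_add_edges[OF finite_diag_points sym es emb
      tl_conn_ext_prefix_conn[OF _ D, unfolded conn], folded conn_Suc]
  show "tl_represents w S (Suc j) (fst (tl_step D i b))"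
    unfolding tl_represents_def
  proof (intro ballI)
    fix u v assume u: "u \<in> tl_points" and v: "v \<in> tl_points"
    have "tl_conn (fst (tl_step D i b)) u v = link_edges (tl_conn_ext D) es (lift_row u) (lift_row v)"
      using tl_conn_tl_step[OF i] u v unfolding es_def by blast
    also have "\<dots> = ((level_emb (Suc j) u, level_emb (Suc j) v) \<in> prefix_conn w S (Suc j))"
      using conjunct1[OF add] j lift_row_tl_points[OF u] lift_row_tl_points[OF v] by auto
    finally show "tl_conn (fst (tl_step D i b)) u v = \<dots>" .
  qed
  have "card (diag_points 3 w // R\<^sup>*) = card (diag_points 3 w // prefix_conn w S (Suc j)) + merge_count (tl_conn_ext D) es"
    using conjunct2[OF add] j by simp
  moreover have "merge_count (tl_conn_ext D) es + snd (tl_step D i b) = 3"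
    using merge_count_tl_step[OF i] unfolding es_def .
  ultimately show "card (diag_points 3 w // prefix_conn w S (Suc j))
           = 3 * (length w - 1 - Suc j) + 3 + (l + snd (tl_step D i b))"
    using l j conn by simp
qed

lemma prefix_invariant_tl_run:
  "j < length w \<Longrightarrow>
     tl_represents w S j (fst (tl_run (TL_id, 0) (prefix_smoothings w S j)))
   \<and> card (diag_points 3 w // prefix_conn w S j)
       = 3 * (length w - 1 - j) + 3 + snd (tl_run (TL_id, 0) (prefix_smoothings w S j))"
proof (induction j)
  case 0
  then show ?case using prefix_invariant_0 by (simp add: tl_run_def prefix_smoothings_def)
next
  case (Suc j)
  obtain D l where run: "tl_run (TL_id, 0) (prefix_smoothings w S j) = (D, l)" by fastforce
  have "tl_represents w S j D" "card (diag_points 3 w // prefix_conn w S j) = 3 * (length w - 1 - j) + 3 + l"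
    using Suc run by simp_all
  moreover have "tl_run (TL_id, 0) (prefix_smoothings w S (Suc j))
      = (fst (tl_step D (strand_index w j) (j \<in> S)), l + snd (tl_step D (strand_index w j) (j \<in> S)))"
    using run by (simp add: tl_run_def prefix_smoothings_def)
  ultimately show ?case using prefix_invariant_Suc[OF Suc.prems] by simp
qed

lemma state_loops_tl_run:
  defines "j \<equiv> length w - 1"
  shows "state_loops 3 w S = snd (tl_run (TL_id, 0) (prefix_smoothings w S j))
      + tl_close (fst (tl_run (TL_id, 0) (prefix_smoothings w S j))) (strand_index w j) (j \<in> S)"
proof -
  obtain D l where run: "tl_run (TL_id, 0) (prefix_smoothings w S j) = (D, l)" by fastforce
  have j: "j < length w" "Suc j = length w" using long j_def by auto
  have D: "tl_represents w S j D" and l: "card (diag_points 3 w // prefix_conn w S j) = 3 + l"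
    using prefix_invariant_tl_run[OF j(1)] run j(2) by simp_all
  define i where "i = strand_index w j"
  define b where "b = (j \<in> S)"
  define R where "R = prefix_edges w S j \<union> (prefix_edges w S j)\<inverse>"
  define es where "es = closing_arcs i b"
  have i: "i = 1 \<or> i = 2" unfolding i_def using j(1) by (rule strand_index_cases)
  have sym: "sym R" unfolding R_def by (simp add: sym_Un_converse)
  have es: "set es \<subseteq> tl_points \<times> tl_points"
    using i unfolding es_def closing_arcs_def tl_points_def other_strand_def by auto
  have emb: "level_emb j ` tl_points \<subseteq> diag_points 3 w"
    using j unfolding tl_points_def diag_points_eq level_emb_def by auto
  have conn: "prefix_conn w S j = R\<^sup>*" by (simp add: prefix_conn_def R_def)
  note add = components_add_edges[OF finite_diag_points sym es emb D[unfolded tl_represents_def conn]]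
  have "state_edges 3 w S = prefix_edges w S (Suc j)" using state_edges_eq_prefix_edges j(2) by simp
  also have "\<dots> = prefix_edges w S j \<union> edges_of (level_emb j) es"
    unfolding prefix_edges_Suc using crossing_edges_last[OF j(2) i] by (simp add: es_def i_def b_def)
  finally have "card (diag_points 3 w // R\<^sup>*) = state_loops 3 w S + merge_count (tl_conn D) es"
    using conjunct2[OF add] unfolding state_loops_def R_def by (simp add: converse_Un Un_ac)
  then show ?thesis
    using merge_count_tl_close[OF i, of D b] l conn run unfolding es_def i_def b_def by simp
qed

end

section \<open>The Kauffman state sum as a transfer recursion\<close>

definition smoothing_weight :: "real \<Rightarrow> bool \<Rightarrow> real" where
  "smoothing_weight A b = (if b then A else inverse A)"

definition loop_value :: "real \<Rightarrow> real" where
  "loop_value A = - A\<^sup>2 - inverse A ^ 2"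

lemma loop_value_neg: "A \<noteq> 0 \<Longrightarrow> loop_value A < 0"
  unfolding loop_value_def by (smt (verit) zero_less_power2 power_inverse inverse_nonzero_iff_nonzero)

text \<open>\<open>tl_loops D xs\<close> is the number of loops of the closure of \<open>D\<close> followed by the smoothings \<open>xs\<close>.\<close>
fun tl_loops :: "tl3 \<Rightarrow> (nat \<times> bool) list \<Rightarrow> nat" where
  "tl_loops D [] = 0"
| "tl_loops D [(i, b)] = tl_close D i b"
| "tl_loops D ((i, b) # x # xs) = snd (tl_step D i b) + tl_loops (fst (tl_step D i b)) (x # xs)"

lemma tl_loops_Cons:
  "xs \<noteq> [] \<Longrightarrow> tl_loops D ((i, b) # xs) = snd (tl_step D i b) + tl_loops (fst (tl_step D i b)) xs"
  by (cases xs) auto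

lemma tl_run_acc: "tl_run (D, l) xs = (fst (tl_run (D, 0) xs), l + snd (tl_run (D, 0) xs))"
proof (induction xs arbitrary: D l)
  case Nil
  then show ?case by (simp add: tl_run_def)
next
  case (Cons x xs)
  obtain i b where x: "x = (i, b)" by fastforce
  show ?case
    using Cons.IH[of "fst (tl_step D i b)" "l + snd (tl_step D i b)"]
      Cons.IH[of "fst (tl_step D i b)" "snd (tl_step D i b)"]
    by (simp add: tl_run_def x)
qed

lemma tl_loops_snoc:
  "tl_loops D (xs @ [(i, b)]) = snd (tl_run (D, 0) xs) + tl_close (fst (tl_run (D, 0) xs)) i b"
proof (induction xs arbitrary: D)
  case Nil
  then show ?case by (simp add: tl_run_def)
next
  case (Cons x xs)
  obtain i' b' where x: "x = (i', b')" by fastforce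
  show ?case
    using Cons.IH tl_run_acc[of "fst (tl_step D i' b')" "snd (tl_step D i' b')" xs]
    by (simp add: tl_loops_Cons tl_run_def x)
qed

lemma tl_loops_pos: "xs \<noteq> [] \<Longrightarrow> 1 \<le> tl_loops D xs"
proof (induction xs arbitrary: D)
  case (Cons x xs)
  obtain i b where x: "x = (i, b)" by fastforce
  show ?case
  proof (cases "xs = []")
    case True
    then show ?thesis using x by (cases D) (simp_all add: tl_close_def)
  next
    case False
    then have "1 \<le> tl_loops (fst (tl_step D i b)) xs" using Cons.IH by blast
    then show ?thesis using False x by (simp add: tl_loops_Cons)
  qed
qed simp

text \<open>The bracket of the closure of \<open>D\<close> followed by crossings on the strands \<open>is\<close>, unnormalised
  (the unknot contributes \<open>loop_value A\<close>), computed as a transfer recursion over \<open>tl3\<close>.\<close>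
fun bracket_from :: "real \<Rightarrow> tl3 \<Rightarrow> nat list \<Rightarrow> real" where
  "bracket_from A D [] = 0"
| "bracket_from A D [i] = (\<Sum>b\<in>{True, False}. smoothing_weight A b * loop_value A ^ tl_close D i b)"
| "bracket_from A D (i # j # is) = (\<Sum>b\<in>{True, False}.
      smoothing_weight A b * loop_value A ^ snd (tl_step D i b) * bracket_from A (fst (tl_step D i b)) (j # is))"

lemma sum_bool_lists_Suc:
  "(\<Sum>bs | length bs = Suc n. f bs) = (\<Sum>bs | length bs = n. f (True # bs)) + (\<Sum>bs | length bs = n. f (False # bs))"
proof -
  have "{bs :: bool list. length bs = Suc n} = Cons True ` {bs. length bs = n} \<union> Cons False ` {bs. length bs = n}"
    by (auto simp: length_Suc_conv)
  moreover have "finite {bs :: bool list. length bs = n}"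
    using finite_lists_length_eq[of "UNIV :: bool set" n] by simp
  ultimately have "(\<Sum>bs | length bs = Suc n. f bs)
      = (\<Sum>bs\<in>Cons True ` {bs. length bs = n}. f bs) + (\<Sum>bs\<in>Cons False ` {bs. length bs = n}. f bs)"
    by (simp only:) (rule sum.union_disjoint, auto)
  then show ?thesis by (simp add: sum.reindex)
qed

lemma sum_bracket_from:
  "is \<noteq> [] \<Longrightarrow>
   (\<Sum>bs | length bs = length is. prod_list (map (smoothing_weight A) bs) * loop_value A ^ tl_loops D (zip is bs))
     = bracket_from A D is"
proof (induction "is" arbitrary: D)
  case (Cons i "is")
  show ?case
  proof (cases "is = []")
    case True
    have "{bs :: bool list. length bs = 0} = {[]}" by auto
    then show ?thesis using True by (simp add: sum_bool_lists_Suc)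
  next
    case False
    have zip_ne: "zip is bs \<noteq> []" if "length bs = length is" for bs
      using False that by (cases "is"; cases bs) auto
    let ?term = "\<lambda>D bs. prod_list (map (smoothing_weight A) bs) * loop_value A ^ tl_loops D (zip is bs)"
    let ?after = "\<lambda>b. smoothing_weight A b * loop_value A ^ snd (tl_step D i b)"
    have "(\<Sum>bs | length bs = length (i # is).
             prod_list (map (smoothing_weight A) bs) * loop_value A ^ tl_loops D (zip (i # is) bs))
      = (\<Sum>bs | length bs = length is. ?after True * ?term (fst (tl_step D i True)) bs)
      + (\<Sum>bs | length bs = length is. ?after False * ?term (fst (tl_step D i False)) bs)"
      unfolding length_Cons sum_bool_lists_Suc
      by (intro arg_cong2[where f = "(+)"] sum.cong refl; simp only: mem_Collect_eq; frule zip_ne;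
          simp add: tl_loops_Cons power_add)
    also have "\<dots> = bracket_from A D (i # is)"
      unfolding sum_distrib_left[symmetric] Cons.IH[OF False] using False by (cases "is") simp_all
    finally show ?thesis .
  qed
qed simp

lemma sum_Pow_eq_sum_bool_lists:
  "(\<Sum>S\<in>Pow {0..<n}. f (map (\<lambda>j. j \<in> S) [0..<n])) = (\<Sum>bs | length bs = n. f bs)"
proof (rule sum.reindex_bij_witness[where i = "\<lambda>bs. {j. j < n \<and> bs ! j}" and j = "\<lambda>S. map (\<lambda>j. j \<in> S) [0..<n]"])
  fix bs :: "bool list" assume "bs \<in> {bs. length bs = n}"
  then show "map (\<lambda>j. j \<in> {j. j < n \<and> bs ! j}) [0..<n] = bs" by (intro nth_equalityI) auto
qed auto

lemma kauffman_state_term: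
  fixes w :: braid_word and S :: "nat set" and A :: real
  assumes "set w \<subseteq> {1, 2}" "2 \<le> length w" "A \<noteq> 0"
  defines "bs \<equiv> map (\<lambda>j. j \<in> S) [0..<length w]"
  shows "(\<Prod>j\<in>{0..<length w}. if (j \<in> S) = (w ! j > 0) then A else inverse A)
           * (- A\<^sup>2 - inverse A ^ 2) ^ (state_loops 3 w S - 1)
       = prod_list (map (smoothing_weight A) bs)
           * loop_value A ^ tl_loops TL_id (zip (map (strand_index w) [0..<length w]) bs) / loop_value A"
proof -
  let ?n = "length w"
  have "w ! j > 0" if "j < ?n" for j
    using assms(1) nth_mem[OF that] by auto
  then have "(\<Prod>j\<in>{0..<?n}. if (j \<in> S) = (w ! j > 0) then A else inverse A)
      = (\<Prod>j\<in>{0..<?n}. smoothing_weight A (j \<in> S))"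
    by (intro prod.cong) (auto simp: smoothing_weight_def)
  also have "\<dots> = prod_list (map (smoothing_weight A) bs)"
    unfolding bs_def by (simp add: prod.distinct_set_conv_list[symmetric] comp_def)
  finally have weights: "(\<Prod>j\<in>{0..<?n}. if (j \<in> S) = (w ! j > 0) then A else inverse A)
      = prod_list (map (smoothing_weight A) bs)" .
  have "Suc (?n - 1) = ?n" using assms(2) by simp
  then have "[0..<?n] = [0..<?n - 1] @ [?n - 1]"
    using upt_Suc_append[of 0 "?n - 1"] by simp
  then have "zip (map (strand_index w) [0..<?n]) bs = prefix_smoothings w S (?n - 1) @ [(strand_index w (?n - 1), ?n - 1 \<in> S)]"
    unfolding bs_def prefix_smoothings_def by (simp add: zip_map_map zip_same_conv_map)
  then have loops: "state_loops 3 w S = tl_loops TL_id (zip (map (strand_index w) [0..<?n]) bs)"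
    using state_loops_tl_run[OF assms(1,2)] by (simp add: tl_loops_snoc)
  have "zip (map (strand_index w) [0..<?n]) bs \<noteq> []" using assms(2) unfolding bs_def by (cases w) auto
  then have "1 \<le> state_loops 3 w S" unfolding loops by (rule tl_loops_pos)
  then have "loop_value A ^ (state_loops 3 w S - 1) = loop_value A ^ state_loops 3 w S / loop_value A"
    using loop_value_neg[OF assms(3)] by (simp add: power_diff)
  then show ?thesis unfolding weights loop_value_def[symmetric] loops by simp
qed

lemma kauffman_bracket_3_eq_bracket_from:
  assumes "set w \<subseteq> {1, 2}" "2 \<le> length w" "A \<noteq> 0"
  shows "kauffman_bracket 3 w A = bracket_from A TL_id (map (strand_index w) [0..<length w]) / loop_value A"
proof -
  let ?is = "map (strand_index w) [0..<length w]"
  define F where "F bs = prod_list (map (smoothing_weight A) bs) * loop_value A ^ tl_loops TL_id (zip ?is bs)"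
    for bs
  have "kauffman_bracket 3 w A = (\<Sum>S\<in>Pow {0..<length w}. F (map (\<lambda>j. j \<in> S) [0..<length w])) / loop_value A"
    unfolding kauffman_bracket_def kauffman_state_term[OF assms] F_def by (simp only: sum_divide_distrib)
  also have "\<dots> = (\<Sum>bs | length bs = length w. F bs) / loop_value A"
    by (simp only: sum_Pow_eq_sum_bool_lists)
  also have "\<dots> = bracket_from A TL_id ?is / loop_value A"
  proof -
    have "w \<noteq> []" using assms(2) by (cases w) auto
    then show ?thesis using sum_bracket_from[of ?is] unfolding F_def by simp
  qed
  finally show ?thesis .
qed

section \<open>Powers of \<open>\<Delta>\<^sub>3\<close>\<close>

definition delta_word :: "nat \<Rightarrow> nat list" where
  "delta_word m = concat (replicate m [1, 2, 1])"

lemma delta_word_Suc: "delta_word (Suc m) = 1 # 2 # 1 # delta_word m"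
  by (simp add: delta_word_def)

text \<open>The solution of the transfer recursion along \<open>\<Delta>\<^sub>3\<^sup>2\<^sup>k\<^sup>+\<^sup>1\<close> and \<open>\<Delta>\<^sub>3\<^sup>2\<^sup>k\<^sup>+\<^sup>2\<close> from each diagram,
  with \<open>X = A\<^sup>6\<^sup>k\<close> and \<open>Y = A\<^sup>-\<^sup>6\<^sup>k\<close>.\<close>
definition bracket_odd :: "real \<Rightarrow> real \<Rightarrow> real \<Rightarrow> tl3 \<Rightarrow> real" where
  "bracket_odd A X Y D = (case D of
      TL_id \<Rightarrow> - X * inverse A ^ 3 * (1 + A^4 + A^8 + A^12)
    | TL_e1 \<Rightarrow> Y * inverse A ^ 5 * (1 + A^4)
    | TL_e2 \<Rightarrow> Y * inverse A ^ 5 * (1 + A^4)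
    | TL_e1e2 \<Rightarrow> - Y * inverse A ^ 7 * (1 + 2*A^4 + A^8)
    | TL_e2e1 \<Rightarrow> - Y * inverse A ^ 7 * (1 + 2*A^4 + A^8))"

definition bracket_even :: "real \<Rightarrow> real \<Rightarrow> real \<Rightarrow> tl3 \<Rightarrow> real" where
  "bracket_even A X Y D = (case D of
      TL_id \<Rightarrow> - 2 * Y * (inverse A ^ 8 + inverse A ^ 4) - X * (1 + A^4 + A^8 + A^12)
    | TL_e1 \<Rightarrow> Y * inverse A ^ 10 * (1 + 2*A^4 + A^8)
    | TL_e2 \<Rightarrow> Y * inverse A ^ 10 * (1 + 2*A^4 + A^8)
    | TL_e1e2 \<Rightarrow> - Y * (inverse A ^ 8 + inverse A ^ 4)
    | TL_e2e1 \<Rightarrow> - Y * (inverse A ^ 8 + inverse A ^ 4))"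

lemma bracket_from_Delta3:
  assumes "A \<noteq> 0"
  shows "bracket_from A D [1, 2, 1] = bracket_odd A 1 1 D"
proof -
  have "A * inverse A = 1" using assms by simp
  then show ?thesis
    by (induction D)
      (simp_all add: bracket_odd_def tl_step_def tl_close_def smoothing_weight_def loop_value_def, algebra+)
qed

lemma bracket_from_odd_to_even:
  assumes "A \<noteq> 0" and odd: "\<And>D. bracket_from A D (y # ys) = bracket_odd A X Y D"
  shows "bracket_from A D (1 # 2 # 1 # y # ys) = bracket_even A X Y D"
proof -
  have "A * inverse A = 1" using assms by simp
  then show ?thesis
    by (induction D) (simp_all add: odd bracket_odd_def bracket_even_def tl_step_def tl_close_def
        smoothing_weight_def loop_value_def, algebra+)
qed

lemma bracket_from_even_to_odd:
  assumes "A \<noteq> 0" and even: "\<And>D. bracket_from A D (y # ys) = bracket_even A X Y D"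
  shows "bracket_from A D (1 # 2 # 1 # y # ys) = bracket_odd A (X * A ^ 6) (Y * inverse A ^ 6) D"
proof -
  have "A * inverse A = 1" using assms by simp
  then show ?thesis
    by (induction D) (simp_all add: even bracket_odd_def bracket_even_def tl_step_def tl_close_def
        smoothing_weight_def loop_value_def, algebra+)
qed

lemma bracket_from_delta_word:
  assumes "A \<noteq> 0"
  shows "bracket_from A D (delta_word (2 * k + 1)) = bracket_odd A (A ^ (6 * k)) (inverse A ^ (6 * k)) D
       \<and> bracket_from A D (delta_word (2 * k + 2)) = bracket_even A (A ^ (6 * k)) (inverse A ^ (6 * k)) D"
proof (induction k arbitrary: D)
  case 0
  have odd: "bracket_from A D [1, 2, 1] = bracket_odd A 1 1 D" for D
    using bracket_from_Delta3[OF assms] .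
  show ?case
    using odd bracket_from_odd_to_even[OF assms odd, of D] by (simp add: delta_word_def numeral_2_eq_2)
next
  case (Suc k)
  let ?X = "A ^ (6 * k)" and ?Y = "inverse A ^ (6 * k)"
  have even: "bracket_from A D (1 # 2 # 1 # delta_word (2 * k + 1)) = bracket_even A ?X ?Y D" for D
    using Suc.IH[of D] by (simp add: delta_word_Suc)
  have odd': "bracket_from A D (1 # 2 # 1 # 1 # 2 # 1 # delta_word (2 * k + 1))
      = bracket_odd A (?X * A ^ 6) (?Y * inverse A ^ 6) D" for D
    using bracket_from_even_to_odd[OF assms even] .
  have "bracket_from A D (1 # 2 # 1 # 1 # 2 # 1 # 1 # 2 # 1 # delta_word (2 * k + 1))
      = bracket_even A (?X * A ^ 6) (?Y * inverse A ^ 6) D"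
    using bracket_from_odd_to_even[OF assms odd'] .
  then show ?case
    using odd' by (simp add: delta_word_Suc power_add mult_ac)
qed

lemma braid_pow_Delta3: "braid_pow Delta3 m = map int (delta_word m)"
  by (induction m) (simp_all add: braid_pow_def Delta3_def delta_word_def)

lemma writhe_braid_pow_Delta3: "writhe (braid_pow Delta3 m) = int (3 * m)"
  by (induction m) (simp_all add: braid_pow_def Delta3_def writhe_def)

lemma kauffman_bracket_braid_pow_Delta3:
  assumes "1 \<le> m" "A \<noteq> 0"
  shows "kauffman_bracket 3 (braid_pow Delta3 m) A = bracket_from A TL_id (delta_word m) / loop_value A"
proof -
  let ?w = "braid_pow Delta3 m"
  have length: "length (delta_word m) = 3 * m"
    by (induction m) (simp add: delta_word_def, simp add: delta_word_Suc)
  have "set ?w \<subseteq> {1, 2}" unfolding braid_pow_Delta3 by (auto simp: delta_word_def)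
  moreover have "2 \<le> length ?w" using assms(1) by (simp add: braid_pow_Delta3 length)
  moreover have "map (strand_index ?w) [0..<length ?w] = delta_word m"
    unfolding braid_pow_Delta3 by (rule nth_equalityI) (simp_all add: strand_index_def)
  ultimately show ?thesis using kauffman_bracket_3_eq_bracket_from[OF _ _ assms(2)] by metis
qed

lemma powi_bracket_odd:
  assumes "A \<noteq> 0"
  shows "(- (A ^ 3)) powi (- int (3 * (2 * k + 1))) * (bracket_odd A (A ^ (6 * k)) (inverse A ^ (6 * k)) TL_id / loop_value A)
       = - ((inverse A ^ 2) ^ (6 * k + 5)) - (inverse A ^ 2) ^ (6 * k + 1)"
proof -
  define X where "X = A ^ (6 * k)"
  define Y where "Y = inverse A ^ (6 * k)"
  have XY: "X * Y = 1" unfolding X_def Y_def using assms by (simp add: power_mult_distrib[symmetric])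
  have inv: "A * inverse A = 1" using assms by simp
  have writhe_factor: "(- (A ^ 3)) powi (- int (3 * (2 * k + 1))) = - (Y ^ 3 * inverse A ^ 9)"
  proof -
    have "(- (A ^ 3)) powi (- int (3 * (2 * k + 1))) = inverse ((- (A ^ 3)) ^ (3 * (2 * k + 1)))"
      by (simp only: power_int_minus power_int_of_nat)
    also have "\<dots> = - (inverse A ^ (3 * (3 * (2 * k + 1))))"
    proof -
      have odd: "odd (3 * (2 * k + 1))" by simp
      show ?thesis by (simp only: power_minus_odd[OF odd] power_mult[symmetric] inverse_minus_eq power_inverse)
    qed
    also have "inverse A ^ (3 * (3 * (2 * k + 1))) = Y ^ 3 * inverse A ^ 9"
      unfolding Y_def by (simp add: power_mult[symmetric] power_add[symmetric] algebra_simps)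
    finally show ?thesis .
  qed
  have powers: "(inverse A ^ 2) ^ (6 * k + 5) = Y ^ 2 * inverse A ^ 10"
    "(inverse A ^ 2) ^ (6 * k + 1) = Y ^ 2 * inverse A ^ 2"
    unfolding Y_def by (simp_all add: power_mult[symmetric] power_add[symmetric] algebra_simps)
  have key: "- (Y ^ 3 * inverse A ^ 9) * bracket_odd A X Y TL_id
      = (- (Y ^ 2 * inverse A ^ 10) - Y ^ 2 * inverse A ^ 2) * loop_value A"
    unfolding bracket_odd_def loop_value_def using inv XY by (simp; algebra)
  have "loop_value A \<noteq> 0" using loop_value_neg[OF assms] by simp
  then show ?thesis
    unfolding writhe_factor powers X_def[symmetric] Y_def[symmetric] times_divide_eq_right key by simp
qed

lemma powi_bracket_even:
  assumes "A \<noteq> 0"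
  shows "(- (A ^ 3)) powi (- int (3 * (2 * k + 2))) * (bracket_even A (A ^ (6 * k)) (inverse A ^ (6 * k)) TL_id / loop_value A)
       = 2 * (inverse A ^ 2) ^ (12 * k + 12) + (inverse A ^ 2) ^ (6 * k + 8) + (inverse A ^ 2) ^ (6 * k + 4)"
proof -
  define X where "X = A ^ (6 * k)"
  define Y where "Y = inverse A ^ (6 * k)"
  have XY: "X * Y = 1" unfolding X_def Y_def using assms by (simp add: power_mult_distrib[symmetric])
  have inv: "A * inverse A = 1" using assms by simp
  have writhe_factor: "(- (A ^ 3)) powi (- int (3 * (2 * k + 2))) = Y ^ 3 * inverse A ^ 18"
  proof -
    have "(- (A ^ 3)) powi (- int (3 * (2 * k + 2))) = inverse ((- (A ^ 3)) ^ (3 * (2 * k + 2)))"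
      by (simp only: power_int_minus power_int_of_nat)
    also have "\<dots> = inverse A ^ (3 * (3 * (2 * k + 2)))"
    proof -
      have even: "even (3 * (2 * k + 2))" by simp
      show ?thesis by (simp only: power_minus_even[OF even] power_mult[symmetric] power_inverse)
    qed
    also have "\<dots> = Y ^ 3 * inverse A ^ 18"
      unfolding Y_def by (simp add: power_mult[symmetric] power_add[symmetric] algebra_simps)
    finally show ?thesis .
  qed
  have powers: "(inverse A ^ 2) ^ (12 * k + 12) = Y ^ 4 * inverse A ^ 24"
    "(inverse A ^ 2) ^ (6 * k + 8) = Y ^ 2 * inverse A ^ 16"
    "(inverse A ^ 2) ^ (6 * k + 4) = Y ^ 2 * inverse A ^ 8"
    unfolding Y_def by (simp_all add: power_mult[symmetric] power_add[symmetric] algebra_simps)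
  have key: "Y ^ 3 * inverse A ^ 18 * bracket_even A X Y TL_id
      = (2 * (Y ^ 4 * inverse A ^ 24) + Y ^ 2 * inverse A ^ 16 + Y ^ 2 * inverse A ^ 8) * loop_value A"
    unfolding bracket_even_def loop_value_def using inv XY by (simp; algebra)
  have "loop_value A \<noteq> 0" using loop_value_neg[OF assms] by simp
  then show ?thesis
    unfolding writhe_factor powers X_def[symmetric] Y_def[symmetric] times_divide_eq_right key by simp
qed

lemma jones_closure_eq_bracket:
  assumes "s > 0"
  obtains A where "A > 0" "s = inverse A ^ 2"
    "\<And>w. jones_closure n w s = (- (A ^ 3)) powi (- writhe w) * kauffman_bracket n w A"
proof
  show "s powr (-1/2) > 0" using assms by simp
  have "inverse (s powr (-1/2)) ^ 2 = sqrt s ^ 2"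
    using assms by (simp add: powr_minus powr_half_sqrt)
  then show "s = inverse (s powr (-1/2)) ^ 2" using assms by simp
qed (simp add: jones_closure_def Let_def)

lemma V3_braid_pow_Delta3_odd:
  assumes "s > 0"
  shows "V3 (braid_pow Delta3 (2 * k + 1)) s = - (s ^ (6 * k + 5)) - s ^ (6 * k + 1)"
proof -
  obtain A where A: "A > 0" "s = inverse A ^ 2"
    and V3: "\<And>w. V3 w s = (- (A ^ 3)) powi (- writhe w) * kauffman_bracket 3 w A"
    using jones_closure_eq_bracket[OF assms] by metis
  have nz: "A \<noteq> 0" using A(1) by simp
  have "V3 (braid_pow Delta3 (2 * k + 1)) s
      = (- (A ^ 3)) powi (- int (3 * (2 * k + 1))) * (bracket_odd A (A ^ (6 * k)) (inverse A ^ (6 * k)) TL_id / loop_value A)"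
    unfolding V3 writhe_braid_pow_Delta3 kauffman_bracket_braid_pow_Delta3[OF le_add2 nz]
    by (simp only: conjunct1[OF bracket_from_delta_word[OF nz]])
  also have "\<dots> = - ((inverse A ^ 2) ^ (6 * k + 5)) - (inverse A ^ 2) ^ (6 * k + 1)"
    by (rule powi_bracket_odd[OF nz])
  finally show ?thesis unfolding A(2) .
qed

lemma V3_braid_pow_Delta3_even:
  assumes "s > 0"
  shows "V3 (braid_pow Delta3 (2 * k + 2)) s = 2 * s ^ (12 * k + 12) + s ^ (6 * k + 8) + s ^ (6 * k + 4)"
proof -
  obtain A where A: "A > 0" "s = inverse A ^ 2"
    and V3: "\<And>w. V3 w s = (- (A ^ 3)) powi (- writhe w) * kauffman_bracket 3 w A"
    using jones_closure_eq_bracket[OF assms] by metis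
  have nz: "A \<noteq> 0" using A(1) by simp
  have m: "1 \<le> 2 * k + 2" by simp
  have "V3 (braid_pow Delta3 (2 * k + 2)) s
      = (- (A ^ 3)) powi (- int (3 * (2 * k + 2))) * (bracket_even A (A ^ (6 * k)) (inverse A ^ (6 * k)) TL_id / loop_value A)"
    unfolding V3 writhe_braid_pow_Delta3 kauffman_bracket_braid_pow_Delta3[OF m nz]
    by (simp only: conjunct2[OF bracket_from_delta_word[OF nz]])
  also have "\<dots> = 2 * (inverse A ^ 2) ^ (12 * k + 12) + (inverse A ^ 2) ^ (6 * k + 8) + (inverse A ^ 2) ^ (6 * k + 4)"
    by (rule powi_bracket_even[OF nz])
  finally show ?thesis unfolding A(2) .
qed

lemma V3_Nil:
  assumes "s > 0"
  shows "V3 [] s = 2 + s ^ 2 + s powi (-2)"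
proof -
  obtain A where A: "A > 0" "s = inverse A ^ 2"
    and V3: "\<And>w. V3 w s = (- (A ^ 3)) powi (- writhe w) * kauffman_bracket 3 w A"
    using jones_closure_eq_bracket[OF assms] by metis
  have "diag_points 3 [] // Id = (\<lambda>x. {x}) ` ({0} \<times> {1..3})"
    by (auto simp: diag_points_def levels_def quotient_def)
  then have "state_loops 3 [] {} = 3"
    by (simp add: state_loops_def state_edges_def card_image)
  then have "V3 [] s = (- A\<^sup>2 - inverse A ^ 2)\<^sup>2"
    by (simp add: V3 kauffman_bracket_def writhe_def)
  also have "\<dots> = 2 + (inverse A ^ 2) ^ 2 + inverse ((inverse A ^ 2) ^ 2)"
    using A(1) by (simp add: power2_eq_square field_simps)
  finally show ?thesis using A(2) by (simp add: power_int_minus)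
qed

theorem proposition1p5:
  fixes k :: nat and s :: real
  assumes "s > 0"
  shows "V3 (braid_pow Delta3 (2*k)) s
           = 2 * s ^ (12*k) + s ^ (6*k+2) + s powi (6 * int k - 2)
       \<and> V3 (braid_pow Delta3 (2*k+1)) s = - (s ^ (6*k+5)) - s ^ (6*k+1)"
proof
  show "V3 (braid_pow Delta3 (2*k)) s = 2 * s ^ (12*k) + s ^ (6*k+2) + s powi (6 * int k - 2)"
  proof (cases k)
    case 0
    then show ?thesis using V3_Nil[OF assms] by (simp add: braid_pow_def power2_eq_square)
  next
    case (Suc k')
    have exponents: "2 * k = 2 * k' + 2" "12 * k = 12 * k' + 12" "6 * k + 2 = 6 * k' + 8"
      "6 * int k - 2 = int (6 * k' + 4)"
      using Suc by simp_all
    show ?thesis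
      unfolding exponents power_int_of_nat by (rule V3_braid_pow_Delta3_even[OF assms])
  qed
  show "V3 (braid_pow Delta3 (2*k+1)) s = - (s ^ (6*k+5)) - s ^ (6*k+1)"
    by (rule V3_braid_pow_Delta3_odd[OF assms])
qed

end
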